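(* Let $X$ be a completely regular space and let $\mathcal B\subset\Sigma_X$ be a base for $X$ consisting of co-zero sets. If the family $\{\mathcal P\in[\mathcal B]^{\le\omega}:\mathcal P\subset_!\mathcal B\}$ contains a club, then the family $\{\mathcal P\in[\Sigma_X]^{\le\omega}:\mathcal P\subset_!\Sigma_X\}$ contains a club too.
   Context: $\Sigma_X$ denotes the collection of all co-zero sets of $X$ (sets of the form $f^{-1}((0,1])$ for continuous $f\colon X\to[0,1]$). For a family $\mathcal P$ of open subsets of $X$ contained in a family $\mathcal Q$ of open subsets of $X$, write $\mathcal P\subset_!\mathcal Q$ if for every subfamily $\mathcal S\subset\mathcal P$ and every point $x\notin\operatorname{cl}_X\bigcup\mathcal S$ there exists $W\in\mathcal P$ with $x\in W$ and $W\cap\bigcup\mathcal S=\emptyset$. $[\mathcal Q]^{\le\omega}$ denotes the set of all countable subfamilies of $\mathcal Q$. A family $\mathcal C\subset[\mathcal Q]^{\le\omega}$ is a club if (i) for every increasing sequence $C_1\subset C_2\subset\cdots$ of members of $\mathcal C$, $\bigcup_nC_n\in\mathcal C$, and (ii) every $B\in[\mathcal Q]^{\le\omega}$ is contained in some $C\in\mathcal C$. *)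

theory Defs
  imports "HOL-Analysis.Analysis"
begin

definition cozero_sets :: "'a topology \<Rightarrow> 'a set set" where
  "cozero_sets X = {{x \<in> topspace X. f x \<in> {0<..1}} | f.
       continuous_map X (top_of_set {0..1::real}) f}"

definition is_base :: "'a topology \<Rightarrow> 'a set set \<Rightarrow> bool" where
  "is_base X B \<longleftrightarrow> (\<forall>U\<in>B. openin X U) \<and>
     (\<forall>U. openin X U \<longrightarrow> (\<exists>S\<subseteq>B. \<Union>S = U))"

definition subfam_excl :: "'a topology \<Rightarrow> 'a set set \<Rightarrow> 'a set set \<Rightarrow> bool" where
  "subfam_excl X P Q \<longleftrightarrow> P \<subseteq> Q \<and> (\<forall>U\<in>Q. openin X U) \<and>
     (\<forall>S\<subseteq>P. \<forall>x\<in>topspace X. x \<notin> X closure_of (\<Union>S) \<longrightarrow>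
        (\<exists>W\<in>P. x \<in> W \<and> W \<inter> \<Union>S = {}))"

definition countable_subfams :: "'b set \<Rightarrow> 'b set set" where
  "countable_subfams Q = {P. P \<subseteq> Q \<and> countable P}"

definition is_club :: "'b set \<Rightarrow> 'b set set \<Rightarrow> bool" where
  "is_club Q C \<longleftrightarrow> C \<subseteq> countable_subfams Q \<and>
     (\<forall>F::nat \<Rightarrow> 'b set. (\<forall>n. F n \<in> C) \<and> incseq F \<longrightarrow> (\<Union>n. F n) \<in> C) \<and>
     (\<forall>B\<in>countable_subfams Q. \<exists>D\<in>C. B \<subseteq> D)"

end

theory Submission
  imports Defs
begin

(* Let C be a club in [B]^{<=omega} of families D with D \<subset>_! B.  Choose,
   for every pair U, V of co-zero sets with V \<in> B and V not inside cl U, a nonempty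
   W \<in> B with W \<subseteq> V - cl U (possible because B is a base).  A countable family
   P \<subseteq> \<Sigma>_X whose trace P \<inter> B lies in C and which is closed under this choice
   satisfies P \<subset>_! \<Sigma>_X: every point of an open U \<in> P lies in a member of P \<inter> B
   contained in cl U, which reduces exclusion for subfamilies of P to exclusion
   for subfamilies of P \<inter> B.  Both conditions (trace in a club, closure under a
   binary operation) define clubs in [\<Sigma>_X]^{<=omega}, and clubs are closed under
   intersection, so these families P form the required club. *)

section \<open>Co-zero sets and bases\<close>

lemma cozero_set_openin:
  assumes "U \<in> cozero_sets X"
  shows "openin X U"
proof -
  obtain f where U: "U = {x \<in> topspace X. f x \<in> {0<..1}}"
    and f: "continuous_map X (top_of_set {0..1::real}) f"
    using assms unfolding cozero_sets_def by blast
  have "{0<..1::real} = {0..1} \<inter> {0<..}" by auto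
  then have "openin (top_of_set {0..1::real}) {0<..1}"
    by (metis openin_open_Int open_greaterThan)
  then show ?thesis
    using U f openin_continuous_map_preimage by blast
qed

lemma base_member_outside_closure:
  assumes B: "is_base X B" and V: "openin X V" and nsub: "\<not> V \<subseteq> X closure_of U"
  shows "\<exists>W\<in>B. W \<noteq> {} \<and> W \<subseteq> V - X closure_of U"
proof -
  have "openin X (V - X closure_of U)"
    using V by (simp add: openin_diff)
  then obtain S where S: "S \<subseteq> B" "\<Union>S = V - X closure_of U"
    using B unfolding is_base_def by meson
  moreover have "V - X closure_of U \<noteq> {}"
    using nsub by simp
  ultimately obtain W where "W \<in> S" "W \<noteq> {}"
    by blast
  with S show ?thesis
    by blast
qed

lemma subfam_exclD:
  assumes "subfam_excl X P Q" "S \<subseteq> P" "x \<in> topspace X" "x \<notin> X closure_of \<Union>S"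
  shows "\<exists>W\<in>P. x \<in> W \<and> W \<inter> \<Union>S = {}"
  using assms unfolding subfam_excl_def by blast

section \<open>Extending the relation \<open>\<subset>\<^sub>!\<close>\<close>

definition separates_closures :: "'a topology \<Rightarrow> 'a set set \<Rightarrow> 'a set set \<Rightarrow> bool" where
  "separates_closures X P D \<longleftrightarrow>
     (\<forall>U\<in>P. \<forall>V\<in>D. \<not> V \<subseteq> X closure_of U \<longrightarrow> (\<exists>W\<in>D. W \<noteq> {} \<and> W \<subseteq> V - X closure_of U))"

lemma member_inside_closure:
  assumes D: "subfam_excl X D B" and sep: "separates_closures X P D"
    and U: "U \<in> P" "openin X U" and y: "y \<in> U"
  shows "\<exists>V\<in>D. y \<in> V \<and> V \<subseteq> X closure_of U"
proof -
  define T where "T = {W\<in>D. W \<inter> U = {}}"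
  have "U \<inter> X closure_of \<Union>T = {}"
    using openin_Int_closure_of_eq_empty[OF U(2)] unfolding T_def by blast
  moreover have "y \<in> topspace X"
    using U(2) y openin_subset by blast
  moreover have "T \<subseteq> D"
    unfolding T_def by blast
  ultimately obtain V where V: "V \<in> D" "y \<in> V" "V \<inter> \<Union>T = {}"
    using subfam_exclD[OF D, of T y] y by blast
  have "V \<subseteq> X closure_of U"
  proof (rule ccontr)
    assume "\<not> V \<subseteq> X closure_of U"
    then obtain W where W: "W \<in> D" "W \<noteq> {}" "W \<subseteq> V - X closure_of U"
      using sep U(1) V(1) unfolding separates_closures_def by meson
    have "U \<subseteq> X closure_of U"
      by (rule closure_of_subset[OF openin_subset[OF U(2)]])
    then have "W \<in> T"
      using W unfolding T_def by blast
    then show False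
      using W V(3) by blast
  qed
  then show ?thesis
    using V by blast
qed

text \<open>If \<open>D \<subset>\<^sub>! B\<close> and \<open>D\<close> separates from closures of members of a family
  \<open>D \<subseteq> P \<subseteq> Q\<close> of open sets, then \<open>P \<subset>\<^sub>! Q\<close>: to exclude \<open>x\<close> from \<open>\<Union>S\<close>, \<open>S \<subseteq> P\<close>,
  exclude it from the members of \<open>D\<close> lying inside \<open>cl \<Union>S\<close>.\<close>
lemma subfam_excl_extend:
  assumes D: "subfam_excl X D B" and sep: "separates_closures X P D"
    and DP: "D \<subseteq> P" and PQ: "P \<subseteq> Q" and Qo: "\<forall>U\<in>Q. openin X U"
  shows "subfam_excl X P Q"
  unfolding subfam_excl_def
proof (intro conjI PQ Qo allI impI ballI)
  fix S x
  assume SP: "S \<subseteq> P" and x: "x \<in> topspace X" and xS: "x \<notin> X closure_of \<Union>S"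
  define S' where "S' = {V\<in>D. V \<subseteq> X closure_of \<Union>S}"
  have S'_cover: "\<Union>S \<subseteq> \<Union>S'"
  proof
    fix y assume "y \<in> \<Union>S"
    then obtain U where U: "U \<in> S" "y \<in> U" by blast
    then obtain V where "V \<in> D" "y \<in> V" "V \<subseteq> X closure_of U"
      using member_inside_closure[OF D sep] SP PQ Qo by blast
    moreover have "X closure_of U \<subseteq> X closure_of \<Union>S"
      using U(1) by (intro closure_of_mono) blast
    ultimately show "y \<in> \<Union>S'"
      unfolding S'_def by blast
  qed
  have "X closure_of \<Union>S' \<subseteq> X closure_of \<Union>S"
    by (rule closure_of_minimal) (auto simp: S'_def)
  moreover have "S' \<subseteq> D"
    unfolding S'_def by blast
  ultimately obtain W where W: "W \<in> D" "x \<in> W" "W \<inter> \<Union>S' = {}"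
    using subfam_exclD[OF D, of S' x] x xS by blast
  have "openin X W"
    using D W(1) unfolding subfam_excl_def by (meson subsetD)
  then have "W \<inter> X closure_of \<Union>S' = {}"
    using W(3) openin_Int_closure_of_eq_empty by blast
  moreover have "\<Union>S \<subseteq> X closure_of \<Union>S'"
    using S'_cover closure_of_subset_Int[of X "\<Union>S'"] SP PQ Qo openin_subset by blast
  ultimately show "\<exists>W\<in>P. x \<in> W \<and> W \<inter> \<Union>S = {}"
    using DP W(1,2) by blast
qed

section \<open>Clubs\<close>

lemma club_countable:
  assumes "is_club Q C" "D \<in> C"
  shows "countable D" "D \<subseteq> Q"
  using assms unfolding is_club_def countable_subfams_def by auto

lemma club_chain_Union:
  fixes F :: "nat \<Rightarrow> 'b set"
  assumes "is_club Q C" "\<And>n. F n \<in> C" "incseq F"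
  shows "(\<Union>n. F n) \<in> C"
  using assms unfolding is_club_def by simp

lemma club_superset:
  assumes "is_club Q C" "countable A" "A \<subseteq> Q"
  shows "\<exists>D\<in>C. A \<subseteq> D"
  using assms unfolding is_club_def countable_subfams_def by simp

lemma club_choice:
  assumes "is_club Q C"
  obtains g where "\<And>A. countable A \<Longrightarrow> A \<subseteq> Q \<Longrightarrow> g A \<in> C \<and> A \<subseteq> g A"
proof -
  have "\<forall>A. \<exists>D. countable A \<and> A \<subseteq> Q \<longrightarrow> D \<in> C \<and> A \<subseteq> D"
    using club_superset[OF assms] by blast
  then obtain g where "\<forall>A. countable A \<and> A \<subseteq> Q \<longrightarrow> g A \<in> C \<and> A \<subseteq> g A"
    by (rule choice[THEN exE])
  then show thesis
    using that by blast
qed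

lemma countable_subfams_chain_Union:
  fixes F :: "nat \<Rightarrow> 'b set"
  assumes "\<And>n. F n \<in> countable_subfams Q"
  shows "(\<Union>n. F n) \<in> countable_subfams Q"
  using assms unfolding countable_subfams_def by (auto intro!: countable_UN)

lemma interleaved_chains:
  fixes s t :: "nat \<Rightarrow> 'b set"
  assumes st: "\<And>n. s n \<subseteq> t n" and ts: "\<And>n. t n \<subseteq> s (Suc n)"
  shows "incseq s" "incseq t" "(\<Union>n. s n) = (\<Union>n. t n)"
proof -
  show "incseq s" "incseq t"
    unfolding incseq_Suc_iff using st ts by (meson order_trans)+
  show "(\<Union>n. s n) = (\<Union>n. t n)"
    using st ts by blast
qed

lemma incseq_Union_two:
  fixes F :: "nat \<Rightarrow> 'b set"
  assumes "incseq F" "x \<in> (\<Union>n. F n)" "y \<in> (\<Union>n. F n)"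
  shows "\<exists>n. x \<in> F n \<and> y \<in> F n"
proof -
  obtain i j where "x \<in> F i" "y \<in> F j"
    using assms(2,3) by blast
  moreover have "F i \<subseteq> F (max i j)" "F j \<subseteq> F (max i j)"
    using assms(1) by (simp_all add: incseqD)
  ultimately show ?thesis
    by blast
qed

text \<open>Clubs are closed under intersection: alternate between the two clubs.\<close>
lemma club_Int:
  assumes C1: "is_club Q C1" and C2: "is_club Q C2"
  shows "is_club Q (C1 \<inter> C2)"
  unfolding is_club_def
proof (intro conjI allI impI ballI)
  show "C1 \<inter> C2 \<subseteq> countable_subfams Q"
    using C1 unfolding is_club_def by auto
  show "(\<Union>n. F n) \<in> C1 \<inter> C2" if "(\<forall>n. F n \<in> C1 \<inter> C2) \<and> incseq F" for F
    using that club_chain_Union[OF C1, of F] club_chain_Union[OF C2, of F] by simp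
next
  fix A assume A: "A \<in> countable_subfams Q"
  obtain g1 where g1: "\<And>A. countable A \<Longrightarrow> A \<subseteq> Q \<Longrightarrow> g1 A \<in> C1 \<and> A \<subseteq> g1 A"
    using club_choice[OF C1] by blast
  obtain g2 where g2: "\<And>A. countable A \<Longrightarrow> A \<subseteq> Q \<Longrightarrow> g2 A \<in> C2 \<and> A \<subseteq> g2 A"
    using club_choice[OF C2] by blast
  define s where "s n = ((g2 \<circ> g1) ^^ n) A" for n
  define t where "t n = g1 (s n)" for n
  have s_Suc: "s (Suc n) = g2 (t n)" for n
    unfolding s_def t_def by simp
  have s_countable: "countable (s n) \<and> s n \<subseteq> Q" for n
  proof (induction n)
    case 0
    then show ?case
      using A by (simp add: s_def countable_subfams_def)
  next
    case (Suc n)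
    then have "t n \<in> C1"
      unfolding t_def using g1 by blast
    then have "countable (t n)" "t n \<subseteq> Q"
      using club_countable[OF C1] by auto
    then have "g2 (t n) \<in> C2"
      using g2 by blast
    then show ?case
      unfolding s_Suc using club_countable[OF C2] by auto
  qed
  have t_C1: "t n \<in> C1" and st: "s n \<subseteq> t n" for n
    unfolding t_def using g1 s_countable by auto
  have s_C2: "s (Suc n) \<in> C2" and ts: "t n \<subseteq> s (Suc n)" for n
    unfolding s_Suc using g2[of "t n"] t_C1[of n] club_countable[OF C1] by auto
  note chains = interleaved_chains[of s t, OF st ts]
  note chains' = interleaved_chains[of t "\<lambda>n. s (Suc n)", OF ts st]
  have "(\<Union>n. t n) \<in> C1"
    using club_chain_Union[OF C1 t_C1 chains(2)] .
  moreover have "(\<Union>n. t n) \<in> C2"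
    unfolding chains'(3) using club_chain_Union[OF C2 s_C2 chains'(2)] .
  moreover have "A \<subseteq> (\<Union>n. t n)"
    using st[of 0] by (auto simp: s_def)
  ultimately show "\<exists>D\<in>C1 \<inter> C2. A \<subseteq> D"
    by blast
qed

lemma club_trace:
  assumes C: "is_club B C" and BQ: "B \<subseteq> Q"
  shows "is_club Q {P \<in> countable_subfams Q. P \<inter> B \<in> C}"
  unfolding is_club_def
proof (intro conjI allI impI ballI)
  show "{P \<in> countable_subfams Q. P \<inter> B \<in> C} \<subseteq> countable_subfams Q"
    by blast
next
  fix F :: "nat \<Rightarrow> 'a set"
  assume "(\<forall>n. F n \<in> {P \<in> countable_subfams Q. P \<inter> B \<in> C}) \<and> incseq F"
  then have F: "\<And>n. F n \<in> countable_subfams Q" "\<And>n. F n \<inter> B \<in> C" "incseq F"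
    by simp_all
  have "incseq (\<lambda>n. F n \<inter> B)"
    using F(3) unfolding incseq_def by blast
  have "(\<Union>n. F n) \<inter> B = (\<Union>n. F n \<inter> B)"
    by blast
  also have "\<dots> \<in> C"
    by (rule club_chain_Union[OF C F(2)]) fact
  finally have "(\<Union>n. F n) \<inter> B \<in> C" .
  moreover have "(\<Union>n. F n) \<in> countable_subfams Q"
    using F(1) by (rule countable_subfams_chain_Union)
  ultimately show "(\<Union>n. F n) \<in> {P \<in> countable_subfams Q. P \<inter> B \<in> C}"
    by blast
next
  fix A assume A: "A \<in> countable_subfams Q"
  obtain g where g: "\<And>A. countable A \<Longrightarrow> A \<subseteq> B \<Longrightarrow> g A \<in> C \<and> A \<subseteq> g A"
    using club_choice[OF C] by blast
  define s where "s n = ((\<lambda>P. P \<union> g (P \<inter> B)) ^^ n) A" for n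
  define t where "t n = g (s n \<inter> B)" for n
  have s_0: "s 0 = A" and s_Suc: "s (Suc n) = s n \<union> t n" for n
    unfolding s_def t_def by simp_all
  have s_countable: "countable (s n) \<and> s n \<subseteq> Q" for n
  proof (induction n)
    case 0
    then show ?case
      using A by (simp add: s_0 countable_subfams_def)
  next
    case (Suc n)
    then have "t n \<in> C"
      unfolding t_def using g by auto
    then show ?case
      unfolding s_Suc using Suc club_countable[OF C] BQ by auto
  qed
  have t_C: "t n \<in> C" and st: "s n \<inter> B \<subseteq> t n" for n
    unfolding t_def using g s_countable by auto
  have ts: "t n \<subseteq> s (Suc n) \<inter> B" for n
    unfolding s_Suc using t_C club_countable[OF C] by auto
  note chains = interleaved_chains[of "\<lambda>n. s n \<inter> B" t, OF st ts]
  define P where "P = (\<Union>n. s n)"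
  have "P \<inter> B = (\<Union>n. t n)"
    unfolding P_def chains(3)[symmetric] by blast
  then have "P \<inter> B \<in> C"
    using club_chain_Union[OF C t_C chains(2)] by simp
  moreover have "P \<in> countable_subfams Q"
    unfolding P_def using s_countable by (intro countable_subfams_chain_Union) (simp add: countable_subfams_def)
  moreover have "A \<subseteq> P"
    unfolding P_def using s_0 by blast
  ultimately show "\<exists>D\<in>{P \<in> countable_subfams Q. P \<inter> B \<in> C}. A \<subseteq> D"
    by blast
qed

definition closed_under :: "('b \<Rightarrow> 'b \<Rightarrow> 'b) \<Rightarrow> 'b set \<Rightarrow> bool" where
  "closed_under f P \<longleftrightarrow> (\<forall>x\<in>P. \<forall>y\<in>P. f x y \<in> P)"

text \<open>For a binary operation on \<open>Q\<close>, the countable subfamilies closed under it form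
  a club: close off a countable family in \<open>\<omega>\<close> steps.\<close>
lemma club_closed_under:
  assumes f: "\<And>x y. x \<in> Q \<Longrightarrow> y \<in> Q \<Longrightarrow> f x y \<in> Q"
  shows "is_club Q {P \<in> countable_subfams Q. closed_under f P}"
  unfolding is_club_def
proof (intro conjI allI impI ballI)
  show "{P \<in> countable_subfams Q. closed_under f P} \<subseteq> countable_subfams Q"
    by blast
next
  fix F :: "nat \<Rightarrow> 'a set"
  assume "(\<forall>n. F n \<in> {P \<in> countable_subfams Q. closed_under f P}) \<and> incseq F"
  then have F: "\<And>n. F n \<in> countable_subfams Q" "\<And>n. closed_under f (F n)" "incseq F"
    by simp_all
  have "closed_under f (\<Union>n. F n)"
    unfolding closed_under_def
  proof (intro ballI)
    fix x y assume "x \<in> (\<Union>n. F n)" "y \<in> (\<Union>n. F n)"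
    then obtain n where "x \<in> F n" "y \<in> F n"
      using incseq_Union_two[OF F(3)] by blast
    then have "f x y \<in> F n"
      using F(2)[of n] unfolding closed_under_def by blast
    then show "f x y \<in> (\<Union>n. F n)"
      by blast
  qed
  moreover have "(\<Union>n. F n) \<in> countable_subfams Q"
    using F(1) by (rule countable_subfams_chain_Union)
  ultimately show "(\<Union>n. F n) \<in> {P \<in> countable_subfams Q. closed_under f P}"
    by simp
next
  fix A assume A: "A \<in> countable_subfams Q"
  define s where "s n = ((\<lambda>P. P \<union> case_prod f ` (P \<times> P)) ^^ n) A" for n
  have s_0: "s 0 = A" and s_Suc: "s (Suc n) = s n \<union> case_prod f ` (s n \<times> s n)" for n
    unfolding s_def by simp_all
  have s_countable: "countable (s n) \<and> s n \<subseteq> Q" for n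
  proof (induction n)
    case 0
    then show ?case
      using A by (simp add: s_0 countable_subfams_def)
  next
    case (Suc n)
    then show ?case
      unfolding s_Suc using f by auto
  qed
  have inc: "incseq s"
    unfolding incseq_Suc_iff s_Suc by blast
  define P where "P = (\<Union>n. s n)"
  have "closed_under f P"
    unfolding closed_under_def
  proof (intro ballI)
    fix x y assume "x \<in> P" "y \<in> P"
    then obtain n where "x \<in> s n" "y \<in> s n"
      using incseq_Union_two[OF inc] unfolding P_def by blast
    then have "f x y \<in> s (Suc n)"
      unfolding s_Suc by blast
    then show "f x y \<in> P"
      unfolding P_def by blast
  qed
  moreover have "P \<in> countable_subfams Q"
    unfolding P_def using s_countable by (intro countable_subfams_chain_Union) (simp add: countable_subfams_def)
  moreover have "A \<subseteq> P"
    unfolding P_def using s_0 by blast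
  ultimately show "\<exists>D\<in>{P \<in> countable_subfams Q. closed_under f P}. A \<subseteq> D"
    by blast
qed

lemma separating_choice:
  assumes B: "is_base X B"
  obtains w where
    "\<And>U V. V \<in> B \<Longrightarrow> w U V \<in> B"
    "\<And>U V. V \<notin> B \<Longrightarrow> w U V = V"
    "\<And>U V. V \<in> B \<Longrightarrow> \<not> V \<subseteq> X closure_of U \<Longrightarrow> w U V \<noteq> {} \<and> w U V \<subseteq> V - X closure_of U"
proof
  define w where "w U V = (if V \<in> B \<and> \<not> V \<subseteq> X closure_of U
      then SOME W. W \<in> B \<and> W \<noteq> {} \<and> W \<subseteq> V - X closure_of U else V)" for U V
  have w_sep: "w U V \<in> B \<and> w U V \<noteq> {} \<and> w U V \<subseteq> V - X closure_of U"
    if "V \<in> B" "\<not> V \<subseteq> X closure_of U" for U V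
  proof -
    have "openin X V"
      using B that(1) unfolding is_base_def by blast
    then have "\<exists>W. W \<in> B \<and> W \<noteq> {} \<and> W \<subseteq> V - X closure_of U"
      using base_member_outside_closure[OF B _ that(2)] by blast
    from someI_ex[OF this] show ?thesis
      unfolding w_def using that by simp
  qed
  show "w U V \<in> B" if "V \<in> B" for U V
  proof (cases "V \<subseteq> X closure_of U")
    case True
    then show ?thesis
      using that unfolding w_def by simp
  next
    case False
    then show ?thesis
      using w_sep[OF that] by blast
  qed
  show "w U V = V" if "V \<notin> B" for U V
    using that unfolding w_def by simp
  show "w U V \<noteq> {} \<and> w U V \<subseteq> V - X closure_of U" if "V \<in> B" "\<not> V \<subseteq> X closure_of U" for U V
    using w_sep that by blast
qed

lemma closed_under_separates:
  assumes w: "\<And>U V. V \<in> B \<Longrightarrow> w U V \<in> B"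
    "\<And>U V. V \<in> B \<Longrightarrow> \<not> V \<subseteq> X closure_of U \<Longrightarrow> w U V \<noteq> {} \<and> w U V \<subseteq> V - X closure_of U"
    and P: "closed_under w P"
  shows "separates_closures X P (P \<inter> B)"
  unfolding separates_closures_def
proof (intro ballI impI)
  fix U V assume U: "U \<in> P" and V: "V \<in> P \<inter> B" and nsub: "\<not> V \<subseteq> X closure_of U"
  have "w U V \<in> P \<inter> B"
    using P U V w(1) unfolding closed_under_def by blast
  moreover have "w U V \<noteq> {} \<and> w U V \<subseteq> V - X closure_of U"
    using V nsub w(2) by blast
  ultimately show "\<exists>W\<in>P \<inter> B. W \<noteq> {} \<and> W \<subseteq> V - X closure_of U"
    by blast
qed

theorem corollary2p8:
  fixes X :: "'a topology" and \<B> :: "'a set set"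
  assumes "completely_regular_space X"
    and "\<B> \<subseteq> cozero_sets X"
    and "is_base X \<B>"
    and "\<exists>C. is_club \<B> C \<and> C \<subseteq> {P \<in> countable_subfams \<B>. subfam_excl X P \<B>}"
  shows "\<exists>C. is_club (cozero_sets X) C \<and>
           C \<subseteq> {P \<in> countable_subfams (cozero_sets X). subfam_excl X P (cozero_sets X)}"
proof -
  define \<Sigma> where "\<Sigma> = cozero_sets X"
  obtain C where C: "is_club \<B> C" and C_sub: "C \<subseteq> {P \<in> countable_subfams \<B>. subfam_excl X P \<B>}"
    using assms(4) by blast
  have C_excl: "subfam_excl X D \<B>" if "D \<in> C" for D
    using C_sub that by blast
  obtain w where w_B: "\<And>U V. V \<in> \<B> \<Longrightarrow> w U V \<in> \<B>" and w_id: "\<And>U V. V \<notin> \<B> \<Longrightarrow> w U V = V"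
    and w_sep: "\<And>U V. V \<in> \<B> \<Longrightarrow> \<not> V \<subseteq> X closure_of U \<Longrightarrow> w U V \<noteq> {} \<and> w U V \<subseteq> V - X closure_of U"
    using separating_choice[OF assms(3)] by blast
  have w_\<Sigma>: "w U V \<in> \<Sigma>" if "V \<in> \<Sigma>" for U V
    using that w_B w_id assms(2) unfolding \<Sigma>_def by (cases "V \<in> \<B>") auto
  define C' where "C' = {P \<in> countable_subfams \<Sigma>. P \<inter> \<B> \<in> C} \<inter> {P \<in> countable_subfams \<Sigma>. closed_under w P}"
  have "is_club \<Sigma> C'"
    unfolding C'_def using assms(2) w_\<Sigma>
    by (intro club_Int club_trace[OF C] club_closed_under) (simp_all add: \<Sigma>_def)
  moreover have "subfam_excl X P \<Sigma>" if P: "P \<in> C'" for P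
  proof (rule subfam_excl_extend)
    have P_trace: "P \<inter> \<B> \<in> C" and P_closed: "closed_under w P" and P_sub: "P \<subseteq> \<Sigma>"
      using P unfolding C'_def countable_subfams_def by auto
    show "subfam_excl X (P \<inter> \<B>) \<B>"
      using C_excl[OF P_trace] .
    show "separates_closures X P (P \<inter> \<B>)"
      using closed_under_separates[OF w_B w_sep P_closed] .
    show "P \<inter> \<B> \<subseteq> P" "P \<subseteq> \<Sigma>"
      using P_sub by auto
    show "\<forall>U\<in>\<Sigma>. openin X U"
      using cozero_set_openin unfolding \<Sigma>_def by blast
  qed
  moreover have "C' \<subseteq> countable_subfams \<Sigma>"
    unfolding C'_def by blast
  ultimately show ?thesis
    unfolding \<Sigma>_def by blast
qed

end
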